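(* Let $\{u_n\}_{n\in\mathbb{N}}$ be a Hamel basis of a vector space $E$ and $\{f_n\}_{n\in\mathbb{N}}$ a linearly independent sequence of linear functionals on $E$ separating the points of $E$. Then there exist bijections $\alpha,\beta:\mathbb{N}\to\mathbb{N}$ such that for every $n\in\mathbb{N}$ the matrix $\{f_{\alpha(j)}(u_{\beta(k)})\}_{1\le j,k\le n}$ is invertible. Furthermore, there exist scalars $c_{j,k}\in\mathbb{K}$ for $j\le k$ such that $c_{j,j}\neq0$ for all $j$, and, setting $v_k=\sum_{m=1}^k c_{m,k}u_{\beta(m)}$, one has $f_{\alpha(j)}(v_j)=1$ for all $j\in\mathbb{N}$ and $f_{\alpha(j)}(v_k)=0$ for all $j,k\in\mathbb{N}$ with $j<k$.
   Context: Vector spaces are over $\mathbb{K}\in\{\mathbb{R},\mathbb{C}\}$. *)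

theory Defs
  imports Complex_Main "Jordan_Normal_Form.Matrix"
begin

end

theory Submission
  imports Defs "Jordan_Normal_Form.Determinant"
begin

(* Write M(a, b, n) for the n x n matrix (f (a j) (u (b k)))_{j,k<n}.
   The bijections are built by a back-and-forth recursion that keeps det M(a, b, n) nonzero:
   - a new row r can always be matched by a column c: expanding det M(a(n:=r), b(n:=c), n+1)
     along the last column gives (sum_j K_j f (a j)) (u c) with K_n = det M(a, b, n) /= 0;
     this functional is nonzero by independence of the f's, hence nonzero at some basis vector;
   - a new column c can always be matched by a row r: expanding along the last row gives f r w
     with w = sum_k K_k u (b k), K_n /= 0, so w /= 0 and some f r separates w from 0.
   Alternately taking the least unused row and the least unused column makes both limits
   bijective.  Finally, the last-row cofactors of M(a, b, k+1), divided by its determinant, give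
   the coefficients c_{m,k} (Cramer's rule), with diagonal entry det M(a,b,k) / det M(a,b,k+1). *)

(* Laplace expansion of a bordered matrix along its last row: the cofactors depend only on
   the first n rows, so they can be computed from any matrix agreeing there. *)
lemma det_expand_last_row:
  fixes e e' :: "nat \<times> nat \<Rightarrow> 'a::comm_ring_1"
  assumes "\<And>j k. j < n \<Longrightarrow> k < Suc n \<Longrightarrow> e' (j, k) = e (j, k)"
  shows "det (mat (Suc n) (Suc n) e') = (\<Sum>k<Suc n. e' (n, k) * cofactor (mat (Suc n) (Suc n) e) n k)"
proof -
  have "mat_delete (mat (Suc n) (Suc n) e') n k = mat_delete (mat (Suc n) (Suc n) e) n k" for k
    by (rule eq_matI) (auto simp: mat_delete_def assms)
  then have "cofactor (mat (Suc n) (Suc n) e') n k = cofactor (mat (Suc n) (Suc n) e) n k" for k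
    by (simp add: cofactor_def)
  then show ?thesis
    by (simp add: laplace_expansion_row[of _ "Suc n" n])
qed

lemma det_expand_last_column:
  fixes e e' :: "nat \<times> nat \<Rightarrow> 'a::comm_ring_1"
  assumes "\<And>j k. j < Suc n \<Longrightarrow> k < n \<Longrightarrow> e' (j, k) = e (j, k)"
  shows "det (mat (Suc n) (Suc n) e') = (\<Sum>j<Suc n. e' (j, n) * cofactor (mat (Suc n) (Suc n) e) j n)"
proof -
  have "mat_delete (mat (Suc n) (Suc n) e') j n = mat_delete (mat (Suc n) (Suc n) e) j n" for j
    by (rule eq_matI) (auto simp: mat_delete_def assms)
  then have "cofactor (mat (Suc n) (Suc n) e') j n = cofactor (mat (Suc n) (Suc n) e) j n" for j
    by (simp add: cofactor_def)
  then show ?thesis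
    by (simp add: laplace_expansion_column[of _ "Suc n" n])
qed

lemma cofactor_corner: "cofactor (mat (Suc n) (Suc n) e) n n = det (mat n n e)"
proof -
  have "mat_delete (mat (Suc n) (Suc n) e) n n = mat n n e"
    by (rule eq_matI) (auto simp: mat_delete_def)
  then show ?thesis by (simp add: cofactor_def)
qed

lemma det_nonzero_imp_invertible_mat:
  assumes A: "A \<in> carrier_mat n n" and d: "det A \<noteq> (0::'a::field)"
  shows "invertible_mat A"
proof -
  have "A \<in> Units (ring_mat TYPE('a) n ())" by (rule det_non_zero_imp_unit[OF A d])
  then obtain B where B: "B \<in> carrier_mat n n" "B * A = 1\<^sub>m n" "A * B = 1\<^sub>m n"
    unfolding Units_def ring_mat_def by auto
  show ?thesis unfolding invertible_mat_def inverts_mat_def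
    using A B by (intro conjI exI[of _ B]) auto
qed

lemma prefix_independent_reindex:
  fixes \<phi> :: "nat \<Rightarrow> 'v \<Rightarrow> 'a::comm_ring_1" and a :: "nat \<Rightarrow> nat" and m :: nat
  assumes indep: "\<And>n (c :: nat \<Rightarrow> 'a). (\<forall>x. (\<Sum>i<n. c i * \<phi> i x) = 0) \<Longrightarrow> (\<forall>i<n. c i = 0)"
    and inj: "inj_on a {..<m}"
    and zero: "\<And>x. (\<Sum>j<m. K j * \<phi> (a j) x) = 0"
    and j: "j < m"
  shows "K j = 0"
proof -
  have "finite (a ` {..<m})" by simp
  then obtain N where N: "a ` {..<m} \<subseteq> {..<N}" using finite_nat_bounded by blast
  define c where "c i = (if i \<in> a ` {..<m} then K (the_inv_into {..<m} a i) else 0)" for i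
  have "\<forall>x. (\<Sum>i<N. c i * \<phi> i x) = 0"
  proof
    fix x
    have "(\<Sum>i<N. c i * \<phi> i x) = (\<Sum>i\<in>a ` {..<m}. c i * \<phi> i x)"
      using N by (intro sum.mono_neutral_right) (auto simp: c_def)
    also have "\<dots> = (\<Sum>j<m. c (a j) * \<phi> (a j) x)"
      using sum.reindex[OF inj, of "\<lambda>i. c i * \<phi> i x"] by simp
    also have "\<dots> = (\<Sum>j<m. K j * \<phi> (a j) x)"
      using inj by (intro sum.cong) (auto simp: c_def the_inv_into_f_f)
    finally show "(\<Sum>i<N. c i * \<phi> i x) = 0" using zero by simp
  qed
  then have "c (a j) = 0" using indep N j by blast
  then show ?thesis using inj j by (simp add: c_def the_inv_into_f_f)
qed

context vector_space
begin

lemma independent_family_coefficients_zero: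
  fixes u :: "nat \<Rightarrow> 'b" and b :: "nat \<Rightarrow> nat" and m :: nat
  assumes indep: "independent (range u)" and u: "inj u" and b: "inj_on b {..<m}"
    and zero: "(\<Sum>k<m. K k *s u (b k)) = 0" and k: "k < m"
  shows "K k = 0"
proof -
  have inj: "inj_on (u \<circ> b) {..<m}" using u b by (simp add: comp_inj_on inj_on_subset)
  define c where "c y = K (the_inv_into {..<m} (u \<circ> b) y)" for y
  have "(\<Sum>y\<in>(u \<circ> b) ` {..<m}. c y *s y) = (\<Sum>k<m. c (u (b k)) *s u (b k))"
    using sum.reindex[OF inj, of "\<lambda>y. c y *s y"] by simp
  also have "\<dots> = (\<Sum>k<m. K k *s u (b k))"
    using inj by (intro sum.cong) (auto simp: c_def the_inv_into_f_f[OF inj, simplified])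
  finally have "(\<Sum>y\<in>(u \<circ> b) ` {..<m}. c y *s y) = 0" using zero by simp
  then have "c (u (b k)) = 0"
    by (rule independentD[OF indep, rotated 2]) (use k in auto)
  then show ?thesis using inj k by (simp add: c_def the_inv_into_f_f[OF inj, simplified])
qed

lemma functional_combination_zero_on_span:
  fixes \<phi> :: "'i \<Rightarrow> 'b \<Rightarrow> 'a" and K :: "'i \<Rightarrow> 'a"
  assumes lin: "\<And>i. Vector_Spaces.linear scale (*) (\<phi> i)"
    and zero: "\<And>b. b \<in> B \<Longrightarrow> (\<Sum>i\<in>I. K i * \<phi> i b) = 0"
    and x: "x \<in> span B"
  shows "(\<Sum>i\<in>I. K i * \<phi> i x) = 0"
proof -
  have hom: "module_hom scale (*) (\<phi> i)" for i using lin by (simp add: module_hom_iff_linear)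
  have "Modules.module ((*) :: 'a \<Rightarrow> 'a \<Rightarrow> 'a)" using hom[of undefined] by (simp add: module_hom_iff)
  moreover have "(\<Sum>i\<in>I. K i * \<phi> i (y + z)) = (\<Sum>i\<in>I. K i * \<phi> i y) + (\<Sum>i\<in>I. K i * \<phi> i z)" for y z
    by (simp add: module_hom.add[OF hom] distrib_left sum.distrib)
  moreover have "(\<Sum>i\<in>I. K i * \<phi> i (c *s y)) = c * (\<Sum>i\<in>I. K i * \<phi> i y)" for c y
    by (simp add: module_hom.scale[OF hom] sum_distrib_left mult.left_commute)
  ultimately have "module_hom scale (*) (\<lambda>x. \<Sum>i\<in>I. K i * \<phi> i x)"
    by (simp add: module_hom_iff module_axioms)
  then show ?thesis using module_hom.eq_0_on_span zero x by blast
qed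

end

lemma inj_if_fresh:
  fixes h :: "nat \<Rightarrow> 'a"
  assumes "\<And>n. h n \<notin> h ` {..<n}"
  shows "inj h"
proof (rule injI)
  fix i j assume "h i = h j"
  then show "i = j" using assms[of i] assms[of j] by (metis lessThan_iff image_eqI linorder_neqE_nat)
qed

lemma surj_if_least_missing:
  fixes h :: "nat \<Rightarrow> nat"
  assumes least: "\<And>m. h (2 * m + p) = (LEAST r. r \<notin> h ` {..<2 * m + p})"
  shows "surj h"
proof -
  have "m \<in> h ` {..2 * m + p}" for m
  proof (induction m rule: less_induct)
    case (less m)
    have earlier: "{..<m} \<subseteq> h ` {..<2 * m + p}"
    proof
      fix m' assume "m' \<in> {..<m}"
      then have "m' \<in> h ` {..2 * m' + p}" and "{..2 * m' + p} \<subseteq> {..<2 * m + p}"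
        using less.IH by auto
      then show "m' \<in> h ` {..<2 * m + p}" by blast
    qed
    show ?case
    proof (cases "m \<in> h ` {..<2 * m + p}")
      case True
      then show ?thesis by auto
    next
      case False
      have "(LEAST r. r \<notin> h ` {..<2 * m + p}) = m"
        by (rule Least_equality) (use False earlier in \<open>auto simp: not_le[symmetric]\<close>)
      then show ?thesis using least[of m] by (metis atMost_iff image_eqI order_refl)
    qed
  qed
  then show ?thesis by blast
qed

definition admissible_step ::
  "((nat \<Rightarrow> nat) \<Rightarrow> (nat \<Rightarrow> nat) \<Rightarrow> nat \<Rightarrow> bool) \<Rightarrow> (nat \<Rightarrow> nat) \<Rightarrow> (nat \<Rightarrow> nat) \<Rightarrow> nat \<Rightarrow> nat \<times> nat \<Rightarrow> bool"
  where "admissible_step P a b n rc \<longleftrightarrow>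
    fst rc \<notin> a ` {..<n} \<and> snd rc \<notin> b ` {..<n} \<and> P (a(n := fst rc)) (b(n := snd rc)) (Suc n) \<and>
    (even n \<longrightarrow> fst rc = (LEAST r. r \<notin> a ` {..<n})) \<and>
    (odd n \<longrightarrow> snd rc = (LEAST c. c \<notin> b ` {..<n}))"

lemma least_unused:
  fixes a :: "nat \<Rightarrow> nat"
  shows "(LEAST r. r \<notin> a ` {..<n}) \<notin> a ` {..<n}"
proof -
  obtain r where "r \<notin> a ` {..<n}"
    using ex_new_if_finite[OF infinite_UNIV_nat, of "a ` {..<n}"] by blast
  then show ?thesis by (rule LeastI)
qed

lemma admissible_step_exists:
  assumes new_row: "\<And>r. r \<notin> a ` {..<n} \<Longrightarrow> \<exists>c. c \<notin> b ` {..<n} \<and> P (a(n := r)) (b(n := c)) (Suc n)"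
    and new_column: "\<And>c. c \<notin> b ` {..<n} \<Longrightarrow> \<exists>r. r \<notin> a ` {..<n} \<and> P (a(n := r)) (b(n := c)) (Suc n)"
  shows "\<exists>rc. admissible_step P a b n rc"
proof (cases "even n")
  case True
  obtain c where "c \<notin> b ` {..<n} \<and> P (a(n := LEAST r. r \<notin> a ` {..<n})) (b(n := c)) (Suc n)"
    using new_row[OF least_unused] by blast
  then have "admissible_step P a b n (LEAST r. r \<notin> a ` {..<n}, c)"
    using True least_unused by (simp add: admissible_step_def)
  then show ?thesis ..
next
  case False
  obtain r where "r \<notin> a ` {..<n} \<and> P (a(n := r)) (b(n := LEAST c. c \<notin> b ` {..<n})) (Suc n)"
    using new_column[OF least_unused] by blast
  then have "admissible_step P a b n (r, LEAST c. c \<notin> b ` {..<n})"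
    using False least_unused by (simp add: admissible_step_def)
  then show ?thesis ..
qed

lemma back_and_forth:
  fixes P :: "(nat \<Rightarrow> nat) \<Rightarrow> (nat \<Rightarrow> nat) \<Rightarrow> nat \<Rightarrow> bool"
  assumes local: "\<And>a b a' b' n. P a b n \<Longrightarrow> (\<And>j. j < n \<Longrightarrow> a' j = a j \<and> b' j = b j) \<Longrightarrow> P a' b' n"
    and init: "P a0 b0 0"
    and new_row: "\<And>a b n r. P a b n \<Longrightarrow> r \<notin> a ` {..<n} \<Longrightarrow>
                  \<exists>c. c \<notin> b ` {..<n} \<and> P (a(n := r)) (b(n := c)) (Suc n)"
    and new_column: "\<And>a b n c. P a b n \<Longrightarrow> c \<notin> b ` {..<n} \<Longrightarrow>
                  \<exists>r. r \<notin> a ` {..<n} \<and> P (a(n := r)) (b(n := c)) (Suc n)"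
  shows "\<exists>\<alpha> \<beta>. bij \<alpha> \<and> bij \<beta> \<and> (\<forall>n. P \<alpha> \<beta> n)"
proof -
  (* F n is the pair of enumerations after n admissible steps; the value at j is fixed at step
     j + 1 and never changed afterwards, so the limits alpha, beta can be read off diagonally. *)
  define F where "F = rec_nat (a0, b0) (\<lambda>n ab.
    let rc = SOME rc. admissible_step P (fst ab) (snd ab) n rc in ((fst ab)(n := fst rc), (snd ab)(n := snd rc)))"
  define choice where "choice n = (SOME rc. admissible_step P (fst (F n)) (snd (F n)) n rc)" for n
  have F_Suc: "F (Suc n) = ((fst (F n))(n := fst (choice n)), (snd (F n))(n := snd (choice n)))" for n
    by (simp add: F_def choice_def Let_def)
  have choice_admissible: "admissible_step P (fst (F n)) (snd (F n)) n (choice n)"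
    if "P (fst (F n)) (snd (F n)) n" for n
    unfolding choice_def
    by (rule someI_ex, rule admissible_step_exists[where P = P]) (simp_all add: new_row new_column that)
  have prefix_ok: "P (fst (F n)) (snd (F n)) n" for n
  proof (induction n)
    case 0
    show ?case using init by (simp add: F_def)
  next
    case (Suc n)
    then have "P ((fst (F n))(n := fst (choice n))) ((snd (F n))(n := snd (choice n))) (Suc n)"
      using choice_admissible[OF Suc] by (simp add: admissible_step_def)
    then show ?case by (simp only: F_Suc fst_conv snd_conv)
  qed
  define \<alpha> where "\<alpha> j = fst (F (Suc j)) j" for j
  define \<beta> where "\<beta> j = snd (F (Suc j)) j" for j
  have stable: "j < n \<Longrightarrow> fst (F n) j = \<alpha> j \<and> snd (F n) j = \<beta> j" for j n
    by (induction n) (auto simp: F_Suc \<alpha>_def \<beta>_def less_Suc_eq)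
  have step: "admissible_step P (fst (F n)) (snd (F n)) n (\<alpha> n, \<beta> n)" for n
    using choice_admissible[OF prefix_ok] by (simp add: \<alpha>_def \<beta>_def F_Suc)
  have images: "fst (F n) ` {..<n} = \<alpha> ` {..<n}" "snd (F n) ` {..<n} = \<beta> ` {..<n}" for n
    using stable by auto
  have "P \<alpha> \<beta> n" for n
    using local[OF prefix_ok] stable by auto
  moreover have "inj \<alpha>" "inj \<beta>"
    using step by (auto intro!: inj_if_fresh simp: admissible_step_def images)
  moreover have "surj \<alpha>"
    by (rule surj_if_least_missing[where p = 0]) (use step in \<open>simp add: admissible_step_def images\<close>)
  moreover have "surj \<beta>"
    by (rule surj_if_least_missing[where p = 1]) (use step in \<open>simp add: admissible_step_def images\<close>)
  ultimately show ?thesis by (blast intro: bijI)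
qed

definition pairing_matrix ::
  "(nat \<Rightarrow> 'v \<Rightarrow> 'a) \<Rightarrow> (nat \<Rightarrow> 'v) \<Rightarrow> (nat \<Rightarrow> nat) \<Rightarrow> (nat \<Rightarrow> nat) \<Rightarrow> nat \<Rightarrow> 'a mat"
  where "pairing_matrix f u \<alpha> \<beta> n = mat n n (\<lambda>(j, k). f (\<alpha> j) (u (\<beta> k)))"

lemma pairing_matrix_cong:
  assumes "\<And>j. j < n \<Longrightarrow> \<alpha>' j = \<alpha> j" and "\<And>k. k < n \<Longrightarrow> \<beta>' k = \<beta> k"
  shows "pairing_matrix f u \<alpha>' \<beta>' n = pairing_matrix f u \<alpha> \<beta> n"
  unfolding pairing_matrix_def by (rule eq_matI) (auto simp: assms)

lemma pairing_matrix_empty: "det (pairing_matrix f u \<alpha> \<beta> 0) = 1"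
proof -
  have "pairing_matrix f u \<alpha> \<beta> 0 = 1\<^sub>m 0" unfolding pairing_matrix_def by (rule eq_matI) auto
  then show ?thesis by simp
qed

lemma pairing_cofactor_corner:
  "cofactor (pairing_matrix f u \<alpha> \<beta> (Suc n)) n n = det (pairing_matrix f u \<alpha> \<beta> n)"
  unfolding pairing_matrix_def by (rule cofactor_corner)

lemma pairing_det_new_column:
  "det (pairing_matrix f u \<alpha> (\<beta>(n := c)) (Suc n)) =
     (\<Sum>j<Suc n. f (\<alpha> j) (u c) * cofactor (pairing_matrix f u \<alpha> \<beta> (Suc n)) j n)"
  unfolding pairing_matrix_def
  by (subst det_expand_last_column[where e = "\<lambda>(j, k). f (\<alpha> j) (u (\<beta> k))"]) auto

lemma pairing_det_repeated_row:
  assumes "i < n" "j < n" "i \<noteq> j" "\<alpha> i = \<alpha> j"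
  shows "det (pairing_matrix f u \<alpha> \<beta> n) = 0"
  unfolding pairing_matrix_def
  by (rule det_identical_rows[of _ n i j]) (auto intro!: eq_vecI simp: assms)

lemma pairing_det_repeated_column:
  assumes "i < n" "j < n" "i \<noteq> j" "\<beta> i = \<beta> j"
  shows "det (pairing_matrix f u \<alpha> \<beta> n) = 0"
  unfolding pairing_matrix_def
  by (rule det_identical_columns[of _ n i j]) (auto intro!: eq_vecI simp: assms)

lemma pairing_det_nonzero_imp_inj:
  assumes "det (pairing_matrix f u \<alpha> \<beta> n) \<noteq> 0"
  shows "inj_on \<alpha> {..<n}" and "inj_on \<beta> {..<n}"
  using assms pairing_det_repeated_row[of _ n _ \<alpha> f u \<beta>] pairing_det_repeated_column[of _ n _ \<beta> f u \<alpha>]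
  by (auto simp: inj_on_def)

lemma inj_on_extend:
  fixes a :: "nat \<Rightarrow> 'a"
  assumes "inj_on a {..<n}" and "r \<notin> a ` {..<n}"
  shows "inj_on (a(n := r)) {..<Suc n}"
  using assms by (auto simp: inj_on_def less_Suc_eq)

context vector_space
begin

lemma pairing_det_new_row:
  assumes lin: "Vector_Spaces.linear scale (*) (f r)"
  shows "det (pairing_matrix f u (\<alpha>(n := r)) \<beta> (Suc n)) =
     f r (\<Sum>k<Suc n. cofactor (pairing_matrix f u \<alpha> \<beta> (Suc n)) n k *s u (\<beta> k))"
proof -
  have hom: "module_hom scale (*) (f r)" using lin by (simp add: module_hom_iff_linear)
  have "det (pairing_matrix f u (\<alpha>(n := r)) \<beta> (Suc n)) =
      (\<Sum>k<Suc n. f r (u (\<beta> k)) * cofactor (pairing_matrix f u \<alpha> \<beta> (Suc n)) n k)"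
    unfolding pairing_matrix_def
    by (subst det_expand_last_row[where e = "\<lambda>(j, k). f (\<alpha> j) (u (\<beta> k))"]) auto
  also have "\<dots> = f r (\<Sum>k<Suc n. cofactor (pairing_matrix f u \<alpha> \<beta> (Suc n)) n k *s u (\<beta> k))"
    by (simp only: module_hom.sum[OF hom] module_hom.scale[OF hom] mult.commute)
  finally show ?thesis .
qed

lemma extend_by_column:
  fixes f :: "nat \<Rightarrow> 'b \<Rightarrow> 'a" and u :: "nat \<Rightarrow> 'b"
  assumes f_lin: "\<And>i. Vector_Spaces.linear scale (*) (f i)"
    and f_indep: "\<And>n (c :: nat \<Rightarrow> 'a). (\<forall>x. (\<Sum>i<n. c i * f i x) = 0) \<Longrightarrow> (\<forall>i<n. c i = 0)"
    and u_span: "span (range u) = UNIV"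
    and \<alpha>: "inj_on \<alpha> {..<Suc n}"
    and minor: "det (pairing_matrix f u \<alpha> \<beta> n) \<noteq> 0"
  shows "\<exists>c. c \<notin> \<beta> ` {..<n} \<and> det (pairing_matrix f u \<alpha> (\<beta>(n := c)) (Suc n)) \<noteq> 0"
proof -
  define K where "K j = cofactor (pairing_matrix f u \<alpha> \<beta> (Suc n)) j n" for j
  have det_eq: "det (pairing_matrix f u \<alpha> (\<beta>(n := c)) (Suc n)) = (\<Sum>j<Suc n. K j * f (\<alpha> j) (u c))" for c
    by (simp add: pairing_det_new_column K_def mult.commute)
  have "\<exists>c. det (pairing_matrix f u \<alpha> (\<beta>(n := c)) (Suc n)) \<noteq> 0"
  proof (rule ccontr)
    assume "\<nexists>c. det (pairing_matrix f u \<alpha> (\<beta>(n := c)) (Suc n)) \<noteq> 0"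
    then have "det (pairing_matrix f u \<alpha> (\<beta>(n := c)) (Suc n)) = 0" for c by blast
    then have zero_on_basis: "\<And>b. b \<in> range u \<Longrightarrow> (\<Sum>j<Suc n. K j * f (\<alpha> j) b) = 0"
      by (metis det_eq rangeE)
    have zero_everywhere: "(\<Sum>j<Suc n. K j * f (\<alpha> j) x) = 0" for x
      by (rule functional_combination_zero_on_span[where \<phi> = "\<lambda>j. f (\<alpha> j)" and B = "range u",
            OF f_lin zero_on_basis])
        (simp_all add: u_span)
    have "K n = 0" using prefix_independent_reindex[where \<phi> = f, OF f_indep \<alpha> zero_everywhere] by simp
    with minor show False by (simp add: K_def pairing_cofactor_corner)
  qed
  then obtain c where c: "det (pairing_matrix f u \<alpha> (\<beta>(n := c)) (Suc n)) \<noteq> 0" by blast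
  moreover have "c \<notin> \<beta> ` {..<n}"
  proof
    assume "c \<in> \<beta> ` {..<n}"
    then obtain k where "k < n" "\<beta> k = c" by auto
    then have "det (pairing_matrix f u \<alpha> (\<beta>(n := c)) (Suc n)) = 0"
      by (intro pairing_det_repeated_column[of k _ n]) auto
    with c show False by simp
  qed
  ultimately show ?thesis by blast
qed

lemma extend_by_row:
  fixes f :: "nat \<Rightarrow> 'b \<Rightarrow> 'a" and u :: "nat \<Rightarrow> 'b"
  assumes f_lin: "\<And>i. Vector_Spaces.linear scale (*) (f i)"
    and f_sep: "\<And>x y. x \<noteq> y \<Longrightarrow> \<exists>i. f i x \<noteq> f i y"
    and u_inj: "inj u" and u_indep: "independent (range u)"
    and \<beta>: "inj_on \<beta> {..<Suc n}"
    and minor: "det (pairing_matrix f u \<alpha> \<beta> n) \<noteq> 0"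
  shows "\<exists>r. r \<notin> \<alpha> ` {..<n} \<and> det (pairing_matrix f u (\<alpha>(n := r)) \<beta> (Suc n)) \<noteq> 0"
proof -
  define K where "K k = cofactor (pairing_matrix f u \<alpha> \<beta> (Suc n)) n k" for k
  define w where "w = (\<Sum>k<Suc n. K k *s u (\<beta> k))"
  have "K n \<noteq> 0" using minor by (simp add: K_def pairing_cofactor_corner)
  then have "w \<noteq> 0"
    using independent_family_coefficients_zero[OF u_indep u_inj \<beta>, of K n] by (auto simp: w_def)
  then obtain r where "f r w \<noteq> f r 0" using f_sep by blast
  moreover have "f r 0 = 0" using f_lin[of r] by (simp add: module_hom_iff_linear[symmetric] module_hom.zero)
  ultimately have r: "det (pairing_matrix f u (\<alpha>(n := r)) \<beta> (Suc n)) \<noteq> 0"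
    by (simp add: pairing_det_new_row[OF f_lin] w_def K_def)
  moreover have "r \<notin> \<alpha> ` {..<n}"
  proof
    assume "r \<in> \<alpha> ` {..<n}"
    then obtain j where "j < n" "\<alpha> j = r" by auto
    then have "det (pairing_matrix f u (\<alpha>(n := r)) \<beta> (Suc n)) = 0"
      by (intro pairing_det_repeated_row[of j _ n]) auto
    with r show False by simp
  qed
  ultimately show ?thesis by blast
qed

lemma leading_minors_nonzero:
  fixes f :: "nat \<Rightarrow> 'b \<Rightarrow> 'a" and u :: "nat \<Rightarrow> 'b"
  assumes u_inj: "inj u" and u_indep: "independent (range u)" and u_span: "span (range u) = UNIV"
    and f_lin: "\<And>i. Vector_Spaces.linear scale (*) (f i)"
    and f_indep: "\<And>n (c :: nat \<Rightarrow> 'a). (\<forall>x. (\<Sum>i<n. c i * f i x) = 0) \<Longrightarrow> (\<forall>i<n. c i = 0)"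
    and f_sep: "\<And>x y. x \<noteq> y \<Longrightarrow> \<exists>i. f i x \<noteq> f i y"
  shows "\<exists>\<alpha> \<beta>. bij \<alpha> \<and> bij \<beta> \<and> (\<forall>n. det (pairing_matrix f u \<alpha> \<beta> n) \<noteq> 0)"
proof (rule back_and_forth[where P = "\<lambda>\<alpha> \<beta> n. det (pairing_matrix f u \<alpha> \<beta> n) \<noteq> 0"])
  fix a b a' b' n
  assume "det (pairing_matrix f u a b n) \<noteq> 0" and "\<And>j. j < n \<Longrightarrow> a' j = a j \<and> b' j = b j"
  moreover from this have "pairing_matrix f u a' b' n = pairing_matrix f u a b n"
    by (intro pairing_matrix_cong) auto
  ultimately show "det (pairing_matrix f u a' b' n) \<noteq> 0" by simp
next
  show "det (pairing_matrix f u (\<lambda>_. 0) (\<lambda>_. 0) 0) \<noteq> 0" by (simp add: pairing_matrix_empty)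
next
  fix a b n r
  assume minor: "det (pairing_matrix f u a b n) \<noteq> 0" and r: "r \<notin> a ` {..<n}"
  have "inj_on (a(n := r)) {..<Suc n}" by (rule inj_on_extend[OF pairing_det_nonzero_imp_inj(1)[OF minor] r])
  moreover have "pairing_matrix f u (a(n := r)) b n = pairing_matrix f u a b n"
    by (rule pairing_matrix_cong) auto
  with minor have "det (pairing_matrix f u (a(n := r)) b n) \<noteq> 0" by simp
  ultimately show "\<exists>c. c \<notin> b ` {..<n} \<and> det (pairing_matrix f u (a(n := r)) (b(n := c)) (Suc n)) \<noteq> 0"
    using extend_by_column[where f = f, OF f_lin f_indep u_span] by blast
next
  fix a b n c
  assume minor: "det (pairing_matrix f u a b n) \<noteq> 0" and c: "c \<notin> b ` {..<n}"
  have "inj_on (b(n := c)) {..<Suc n}" by (rule inj_on_extend[OF pairing_det_nonzero_imp_inj(2)[OF minor] c])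
  moreover have "pairing_matrix f u a (b(n := c)) n = pairing_matrix f u a b n"
    by (rule pairing_matrix_cong) auto
  with minor have "det (pairing_matrix f u a (b(n := c)) n) \<noteq> 0" by simp
  ultimately show "\<exists>r. r \<notin> a ` {..<n} \<and> det (pairing_matrix f u (a(n := r)) (b(n := c)) (Suc n)) \<noteq> 0"
    using extend_by_row[where f = f, OF f_lin f_sep u_inj u_indep] by blast
qed

lemma biorthogonal_from_leading_minors:
  fixes f :: "nat \<Rightarrow> 'b \<Rightarrow> 'a" and u :: "nat \<Rightarrow> 'b"
  assumes f_lin: "\<And>i. Vector_Spaces.linear scale (*) (f i)"
    and minors: "\<And>n. det (pairing_matrix f u \<alpha> \<beta> n) \<noteq> 0"
  shows "\<exists>c :: nat \<Rightarrow> nat \<Rightarrow> 'a. (\<forall>j. c j j \<noteq> 0) \<and>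
           (let v = (\<lambda>k. \<Sum>m\<le>k. c m k *s u (\<beta> m)) in
              (\<forall>j. f (\<alpha> j) (v j) = 1) \<and> (\<forall>j k. j < k \<longrightarrow> f (\<alpha> j) (v k) = 0))"
proof -
  define D where "D k = det (pairing_matrix f u \<alpha> \<beta> (Suc k))" for k
  define K where "K m k = cofactor (pairing_matrix f u \<alpha> \<beta> (Suc k)) k m" for m k
  define c where "c m k = K m k / D k" for m k
  define v where "v k = (\<Sum>m\<le>k. c m k *s u (\<beta> m))" for k
  have f_on_v: "f r (v k) = det (pairing_matrix f u (\<alpha>(k := r)) \<beta> (Suc k)) / D k" for r k
  proof -
    have hom: "module_hom scale (*) (f r)" using f_lin by (simp add: module_hom_iff_linear)
    have "v k = inverse (D k) *s (\<Sum>m<Suc k. K m k *s u (\<beta> m))"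
      by (simp add: v_def c_def scale_sum_right lessThan_Suc_atMost divide_inverse mult.commute)
    then show ?thesis
      by (simp add: module_hom.scale[OF hom] pairing_det_new_row[OF f_lin] K_def divide_inverse mult.commute)
  qed
  have "f (\<alpha> k) (v k) = 1" for k
    using f_on_v[of "\<alpha> k" k] minors[of "Suc k"] by (simp add: D_def)
  moreover have "f (\<alpha> j) (v k) = 0" if "j < k" for j k
    using f_on_v[of "\<alpha> j" k] pairing_det_repeated_row[of j "Suc k" k "\<alpha>(k := \<alpha> j)" f u \<beta>] that by simp
  moreover have "c k k \<noteq> 0" for k
    using minors[of k] minors[of "Suc k"] by (simp add: c_def K_def D_def pairing_cofactor_corner)
  ultimately show ?thesis unfolding v_def Let_def by blast
qed

end

theorem lemma3p4:
  fixes scale :: "'k::real_normed_field \<Rightarrow> 'v::ab_group_add \<Rightarrow> 'v"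
    and u :: "nat \<Rightarrow> 'v"
    and f :: "nat \<Rightarrow> 'v \<Rightarrow> 'k"
  assumes vs: "vector_space scale"
    and u_inj: "inj u"
    and u_indep: "module.independent scale (range u)"
    and u_span: "module.span scale (range u) = UNIV"
    and f_lin: "\<And>n. Vector_Spaces.linear scale (*) (f n)"
    and f_indep: "\<And>n (a :: nat \<Rightarrow> 'k). (\<forall>x. (\<Sum>i<n. a i * f i x) = 0) \<Longrightarrow> (\<forall>i<n. a i = 0)"
    and f_sep: "\<And>x y. x \<noteq> y \<Longrightarrow> \<exists>n. f n x \<noteq> f n y"
  shows "\<exists>\<alpha> \<beta>. bij \<alpha> \<and> bij \<beta> \<and>
           (\<forall>n. invertible_mat (mat n n (\<lambda>(j, k). f (\<alpha> j) (u (\<beta> k))))) \<and>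
           (\<exists>c :: nat \<Rightarrow> nat \<Rightarrow> 'k. (\<forall>j. c j j \<noteq> 0) \<and>
              (let v = (\<lambda>k. \<Sum>m\<le>k. scale (c m k) (u (\<beta> m))) in
                 (\<forall>j. f (\<alpha> j) (v j) = 1) \<and>
                 (\<forall>j k. j < k \<longrightarrow> f (\<alpha> j) (v k) = 0)))"
proof -
  interpret vector_space scale by (rule vs)
  obtain \<alpha> \<beta> where bij: "bij \<alpha>" "bij \<beta>" and minors: "\<And>n. det (pairing_matrix f u \<alpha> \<beta> n) \<noteq> 0"
    using leading_minors_nonzero[where f = f, OF u_inj u_indep u_span f_lin f_indep f_sep] by blast
  have "invertible_mat (pairing_matrix f u \<alpha> \<beta> n)" for n
    by (rule det_nonzero_imp_invertible_mat[where n = n, OF _ minors]) (simp add: pairing_matrix_def)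
  moreover note biorthogonal_from_leading_minors[where f = f, OF f_lin minors]
  ultimately show ?thesis using bij unfolding pairing_matrix_def by blast
qed

end
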